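(* Let $k\in[0,1)$, $k'=\sqrt{1-k^2}$ and $k^*=ik/k'$ (so $(k^* )^2=-k^2/(1-k^2)\le0$ and ${k^*}'=\sqrt{1-(k^* )^2}=1/k'$). Then for every $\bar\theta\in(0,\pi/2)$, $$\sinh\big(2J(\bar\theta|k)\big)\,\sinh\Big(2J\Big(\frac\pi2-\bar\theta\,\Big|\,k^*\Big)\Big)=1.$$ Consequently the high-temperature expansion of the $Z$-invariant Ising model on an isoradial graph $G$ with modulus $k$ and the low-temperature expansion of the $Z$-invariant Ising model on the dual isoradial graph $G^*$ with modulus $k^*$ induce the same measure on polygon configurations of $G$.
   Context: $J(\bar\theta|k)=\frac12\log\frac{1+\mathrm{sn}(\theta|k)}{\mathrm{cn}(\theta|k)}$ with $\theta=\frac{2K(k)}{\pi}\bar\theta$, $K(k)=\int_0^{\pi/2}(1-k^2\sin^2t)^{-1/2}dt$, and $\mathrm{sn},\mathrm{cn}$ the Jacobi elliptic functions of modulus $k$ (equivalently $\sinh(2J(\bar\theta|k))=\mathrm{sc}(\theta|k)$). In the isoradial dual $G^*$, the dual edge $e^*$ of an edge $e$ with rhombus half-angle $\bar\theta_e$ has rhombus half-angle $\frac\pi2-\bar\theta_e$. Polygon configurations are edge subsets with even degree at every vertex; the high-temperature expansion weights a polygon configuration by $\prod_{e}\tanh J_e$, the low-temperature expansion of the dual model (via domain walls) by $\prod_{e}e^{-2J_{e^*}}$. *)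

theory Defs
  imports "HOL-Analysis.Analysis"
begin

text \<open>Jacobi elliptic functions are parametrised by the parameter m = k^2 (real, m < 1),
  so that an imaginary modulus k* = i k / k' is represented by m = -k^2/(1-k^2).\<close>

definition ell_F :: "real \<Rightarrow> real \<Rightarrow> real" where
  "ell_F m phi =
     (if 0 \<le> phi then integral {0..phi} (\<lambda>t. 1 / sqrt (1 - m * (sin t)^2))
      else - integral {phi..0} (\<lambda>t. 1 / sqrt (1 - m * (sin t)^2)))"

definition ell_K :: "real \<Rightarrow> real" where
  "ell_K m = ell_F m (pi / 2)"

definition jac_am :: "real \<Rightarrow> real \<Rightarrow> real" where
  "jac_am m u = (THE phi. ell_F m phi = u)"

definition jac_sn :: "real \<Rightarrow> real \<Rightarrow> real" where
  "jac_sn m u = sin (jac_am m u)"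

definition jac_cn :: "real \<Rightarrow> real \<Rightarrow> real" where
  "jac_cn m u = cos (jac_am m u)"

definition isingJ :: "real \<Rightarrow> real \<Rightarrow> real" where
  "isingJ m thetabar =
     (let theta = 2 * ell_K m / pi * thetabar
      in ln ((1 + jac_sn m theta) / jac_cn m theta) / 2)"

definition polygon_configs :: "'v set \<Rightarrow> 'e set \<Rightarrow> ('e \<Rightarrow> 'v set) \<Rightarrow> 'e set set" where
  "polygon_configs V E ends =
     {C. C \<subseteq> E \<and> (\<forall>v\<in>V. even (card {e\<in>C. v \<in> ends e}))}"

definition config_measure :: "'e set set \<Rightarrow> ('e \<Rightarrow> real) \<Rightarrow> 'e set \<Rightarrow> real" where
  "config_measure \<Omega> w C = (\<Prod>e\<in>C. w e) / (\<Sum>C'\<in>\<Omega>. \<Prod>e\<in>C'. w e)"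

end

theory Submission
  imports Defs
begin

text \<open>The substitution t \<mapsto> \<pi>/2 - t in the elliptic integral gives the imaginary-modulus
  transformation F(\<pi>/2 - \<phi> | k*) = k' (K(k) - F(\<phi> | k)), hence K(k*) = k' K(k): the amplitudes
  of a rhombus half-angle \<theta> for k and of \<pi>/2 - \<theta> for k* are complementary angles \<phi> and \<pi>/2 - \<phi>.
  As J = gd\<inverse>(\<phi>)/2 with the inverse Gudermannian gd\<inverse>(\<phi>) = ln ((1 + sin \<phi>) / cos \<phi>), this gives
  sinh 2J = tan \<phi> and sinh 2J* = cot \<phi>, and tanh J = tan (\<phi>/2) = exp (-2J*); so the high- and
  low-temperature weights agree edge by edge, and with them the induced measures.\<close>

definition ell_integrand :: "real \<Rightarrow> real \<Rightarrow> real" where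
  "ell_integrand m t = 1 / sqrt (1 - m * (sin t)^2)"

lemma ell_radicand_pos:
  fixes m t :: real
  assumes "m < 1"
  shows "0 < 1 - m * (sin t)^2"
proof -
  have "(sin t)^2 \<le> 1"
    by (simp add: abs_square_le_1)
  then have "m * (sin t)^2 \<le> max 0 m"
    by (cases "m \<le> 0") (auto simp: mult_nonpos_nonneg mult_left_le)
  with assms show ?thesis
    by linarith
qed

lemma continuous_on_ell_integrand:
  assumes "m < 1"
  shows "continuous_on S (ell_integrand m)"
proof -
  have "sqrt (1 - m * (sin t)^2) \<noteq> 0" for t
    using ell_radicand_pos[OF assms, of t] by simp
  then show ?thesis
    unfolding ell_integrand_def by (intro continuous_intros) auto
qed

lemma integrable_ell_integrand: "m < 1 \<Longrightarrow> ell_integrand m integrable_on {a..b}"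
  by (rule integrable_continuous_real[OF continuous_on_ell_integrand])

lemma ell_integrand_lower_bound:
  assumes "m < 1"
  shows "1 / sqrt (1 + \<bar>m\<bar>) \<le> ell_integrand m t"
proof -
  have "(sin t)^2 \<le> 1"
    by (simp add: abs_square_le_1)
  then have "- m * (sin t)^2 \<le> \<bar>m\<bar> * 1"
    by (intro mult_mono) auto
  then have "sqrt (1 - m * (sin t)^2) \<le> sqrt (1 + \<bar>m\<bar>)"
    by simp
  moreover have "0 < sqrt (1 - m * (sin t)^2)"
    using ell_radicand_pos[OF assms] by simp
  ultimately show ?thesis
    unfolding ell_integrand_def by (simp add: frac_le)
qed

lemma ell_F_0 [simp]: "ell_F m 0 = 0"
  by (simp add: ell_F_def)

lemma ell_F_diff:
  assumes "m < 1" "a \<le> b"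
  shows "ell_F m b - ell_F m a = integral {a..b} (ell_integrand m)"
proof -
  let ?I = "\<lambda>x y. integral {x..y} (ell_integrand m)"
  have F: "ell_F m x = (if 0 \<le> x then ?I 0 x else - ?I x 0)" for x
    unfolding ell_F_def ell_integrand_def by simp
  have combine: "?I x y + ?I y z = ?I x z" if "x \<le> y" "y \<le> z" for x y z
    using Henstock_Kurzweil_Integration.integral_combine[OF that integrable_ell_integrand[OF assms(1)]]
    by simp
  consider "0 \<le> a" | "a < 0" "0 \<le> b" | "b < 0"
    by linarith
  then show ?thesis
  proof cases
    case 1
    then show ?thesis
      using combine[of 0 a b] assms(2) by (simp add: F)
  next
    case 2
    then show ?thesis
      using combine[of a 0 b] by (simp add: F)
  next
    case 3
    then show ?thesis
      using combine[of a b 0] assms(2) by (simp add: F)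
  qed
qed

lemma strict_mono_ell_F:
  assumes "m < 1"
  shows "strict_mono (ell_F m)"
proof (rule strict_monoI)
  fix a b :: real
  assume "a < b"
  let ?c = "1 / sqrt (1 + \<bar>m\<bar>)"
  have "0 < integral {a..b} (\<lambda>_. ?c)"
    using \<open>a < b\<close> by simp
  also have "\<dots> \<le> integral {a..b} (ell_integrand m)"
    by (intro integral_le integrable_ell_integrand ell_integrand_lower_bound assms) auto
  also have "\<dots> = ell_F m b - ell_F m a"
    using ell_F_diff[OF assms] \<open>a < b\<close> by simp
  finally show "ell_F m a < ell_F m b"
    by simp
qed

lemma jac_am_ell_F: "m < 1 \<Longrightarrow> jac_am m (ell_F m phi) = phi"
  unfolding jac_am_def by (auto simp: strict_mono_eq[OF strict_mono_ell_F])

lemma continuous_on_ell_F: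
  assumes "m < 1"
  shows "continuous_on {a..b} (ell_F m)"
proof (rule continuous_on_eq)
  have "continuous_on {a..b} (\<lambda>x. integral {a..x} (ell_integrand m))"
    by (rule indefinite_integral_continuous_1[OF integrable_ell_integrand[OF assms]])
  then show "continuous_on {a..b} (\<lambda>x. ell_F m a + integral {a..x} (ell_integrand m))"
    by (intro continuous_on_add continuous_on_const)
  show "ell_F m a + integral {a..x} (ell_integrand m) = ell_F m x" if "x \<in> {a..b}" for x
    using ell_F_diff[OF assms, of a x] that by simp
qed

lemma ell_K_pos:
  assumes "m < 1"
  shows "0 < ell_K m"
proof -
  have "ell_F m 0 < ell_F m (pi / 2)"
    by (rule strict_monoD[OF strict_mono_ell_F[OF assms]]) simp
  then show ?thesis
    by (simp add: ell_K_def)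
qed

lemma jac_am_in_quarter:
  assumes "m < 1" "0 < u" "u < ell_K m"
  shows "ell_F m (jac_am m u) = u" "0 < jac_am m u" "jac_am m u < pi / 2"
proof -
  obtain phi where phi: "0 \<le> phi" "phi \<le> pi / 2" "ell_F m phi = u"
    using IVT'[of "ell_F m" 0 u "pi / 2", OF _ _ _ continuous_on_ell_F[OF assms(1)]] assms
    unfolding ell_K_def by auto
  have "phi \<noteq> 0"
    using phi(3) assms(2) by auto
  moreover have "phi \<noteq> pi / 2"
  proof
    assume "phi = pi / 2"
    then have "ell_F m phi = ell_K m"
      unfolding ell_K_def by (rule arg_cong)
    with phi(3) assms(3) show False
      by simp
  qed
  moreover have "jac_am m u = phi"
    using jac_am_ell_F[OF assms(1), of phi] unfolding phi(3) .
  ultimately show "ell_F m (jac_am m u) = u" "0 < jac_am m u" "jac_am m u < pi / 2"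
    using phi by auto
qed

lemma scaled_angle_bounds:
  assumes "m < 1" "0 < tb" "tb < pi / 2"
  shows "0 < 2 * ell_K m / pi * tb" "2 * ell_K m / pi * tb < ell_K m"
proof -
  have K: "0 < ell_K m"
    using ell_K_pos[OF assms(1)] .
  then show "0 < 2 * ell_K m / pi * tb"
    using assms by simp
  have "2 * ell_K m / pi * tb < 2 * ell_K m / pi * (pi / 2)"
    using K assms by (intro mult_strict_left_mono) auto
  then show "2 * ell_K m / pi * tb < ell_K m"
    by simp
qed

lemma integral_reflect_real_at:
  fixes g :: "real \<Rightarrow> 'b::real_normed_vector"
  shows "integral {0..a - p} (\<lambda>t. g (a - t)) = integral {p..a} g"
proof -
  have "integral {0..a - p} (\<lambda>t. g (a - t)) = integral {p - a..0} (\<lambda>y. g (y + a))"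
    using Henstock_Kurzweil_Integration.integral_reflect_real[of 0 "p - a" "\<lambda>y. g (y + a)"]
    by (simp add: algebra_simps)
  also have "\<dots> = integral {p..a} g"
    using integral_shift_real_ivl[where f = g and c = a and a = p and b = a] by simp
  finally show ?thesis .
qed

lemma ell_integrand_imaginary_modulus:
  fixes m t :: real
  assumes "m < 1"
  shows "ell_integrand (- m / (1 - m)) t = sqrt (1 - m) * ell_integrand m (pi / 2 - t)"
proof -
  have "sin (pi / 2 - t) = cos t"
    by (simp add: sin_diff)
  moreover have "1 - (- m / (1 - m)) * (sin t)^2 = (1 - m * (cos t)^2) / (1 - m)"
    using assms by (simp add: field_simps sin_squared_eq)
  ultimately have "1 - (- m / (1 - m)) * (sin t)^2 = (1 - m * (sin (pi / 2 - t))^2) / (1 - m)"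
    by simp
  then show ?thesis
    unfolding ell_integrand_def by (simp add: real_sqrt_divide)
qed

lemma ell_F_imaginary_modulus:
  assumes "m < 1" "0 \<le> phi" "phi \<le> pi / 2"
  shows "ell_F (- m / (1 - m)) (pi / 2 - phi) = sqrt (1 - m) * (ell_K m - ell_F m phi)"
proof -
  have "ell_F (- m / (1 - m)) (pi / 2 - phi) = integral {0..pi / 2 - phi} (ell_integrand (- m / (1 - m)))"
    using assms unfolding ell_F_def ell_integrand_def by simp
  also have "\<dots> = integral {0..pi / 2 - phi} (\<lambda>t. sqrt (1 - m) * ell_integrand m (pi / 2 - t))"
    by (intro integral_cong ell_integrand_imaginary_modulus assms(1))
  also have "\<dots> = sqrt (1 - m) * integral {phi..pi / 2} (ell_integrand m)"
    by (simp add: integral_reflect_real_at)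
  also have "integral {phi..pi / 2} (ell_integrand m) = ell_K m - ell_F m phi"
    using ell_F_diff[OF assms(1,3)] unfolding ell_K_def by simp
  finally show ?thesis .
qed

lemma ell_K_imaginary_modulus: "m < 1 \<Longrightarrow> ell_K (- m / (1 - m)) = sqrt (1 - m) * ell_K m"
  using ell_F_imaginary_modulus[of m 0] unfolding ell_K_def by simp

lemma jac_am_imaginary_modulus:
  assumes "m < 1" "0 < tb" "tb < pi / 2"
  shows "jac_am (- m / (1 - m)) (2 * ell_K (- m / (1 - m)) / pi * (pi / 2 - tb))
       = pi / 2 - jac_am m (2 * ell_K m / pi * tb)"
proof -
  define phi where "phi = jac_am m (2 * ell_K m / pi * tb)"
  have phi: "ell_F m phi = 2 * ell_K m / pi * tb" "0 < phi" "phi < pi / 2"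
    using jac_am_in_quarter[OF assms(1) scaled_angle_bounds[OF assms]] unfolding phi_def by auto
  have "- m / (1 - m) < 1"
    using assms(1) by (simp add: field_simps)
  have "2 * ell_K (- m / (1 - m)) / pi * (pi / 2 - tb) = sqrt (1 - m) * (ell_K m - ell_F m phi)"
    unfolding ell_K_imaginary_modulus[OF assms(1)] phi(1) by (simp add: field_simps)
  also have "\<dots> = ell_F (- m / (1 - m)) (pi / 2 - phi)"
    using ell_F_imaginary_modulus[OF assms(1), of phi] phi(2,3) by simp
  finally have "2 * ell_K (- m / (1 - m)) / pi * (pi / 2 - tb) = ell_F (- m / (1 - m)) (pi / 2 - phi)" .
  then have "jac_am (- m / (1 - m)) (2 * ell_K (- m / (1 - m)) / pi * (pi / 2 - tb)) = pi / 2 - phi"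
    by (simp only: jac_am_ell_F[OF \<open>- m / (1 - m) < 1\<close>])
  then show ?thesis
    unfolding phi_def .
qed

definition gd_inv :: "real \<Rightarrow> real" where
  "gd_inv phi = ln ((1 + sin phi) / cos phi)"

lemma isingJ_eq_gd_inv: "isingJ m tb = gd_inv (jac_am m (2 * ell_K m / pi * tb)) / 2"
  by (simp only: isingJ_def gd_inv_def jac_sn_def jac_cn_def Let_def)

lemma gd_inv_arg_pos:
  fixes phi :: real
  assumes "0 < cos phi"
  shows "0 < 1 + sin phi" "0 < (1 + sin phi) / cos phi"
proof -
  have "sin phi \<noteq> -1"
  proof
    assume "sin phi = -1"
    then have "(cos phi)^2 = 0"
      using sin_cos_squared_add[of phi] by simp
    with assms show False
      by simp
  qed
  then show "0 < 1 + sin phi"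
    using sin_ge_minus_one[of phi] by linarith
  with assms show "0 < (1 + sin phi) / cos phi"
    by simp
qed

lemma sinh_gd_inv:
  fixes phi :: real
  assumes "0 < cos phi"
  shows "sinh (gd_inv phi) = tan phi"
proof -
  let ?s = "sin phi" and ?c = "cos phi"
  have pos: "0 < 1 + ?s"
    using gd_inv_arg_pos[OF assms] by simp
  have "sinh (gd_inv phi) = ((1 + ?s) / ?c - ?c / (1 + ?s)) / 2"
    unfolding gd_inv_def sinh_ln_real[OF gd_inv_arg_pos(2)[OF assms]] by simp
  also have "(1 + ?s) / ?c - ?c / (1 + ?s) = ((1 + ?s) * (1 + ?s) - ?c * ?c) / (?c * (1 + ?s))"
    using assms pos by (simp add: diff_frac_eq)
  also have "(1 + ?s) * (1 + ?s) - ?c * ?c = 2 * ?s * (1 + ?s)"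
    using sin_cos_squared_add[of phi] by (simp add: algebra_simps power2_eq_square)
  finally show ?thesis
    using pos by (simp add: tan_def)
qed

lemma tanh_half_gd_inv:
  fixes phi :: real
  assumes "0 < cos phi"
  shows "tanh (gd_inv phi / 2) = tan (phi / 2)"
proof -
  let ?s = "sin phi" and ?c = "cos phi"
  have pos: "0 < 1 + ?s" "0 < (1 + ?s) / ?c"
    using gd_inv_arg_pos[OF assms] by simp_all
  have "exp (- 2 * (gd_inv phi / 2)) = ?c / (1 + ?s)"
    unfolding gd_inv_def using pos by (simp add: exp_minus)
  then have "tanh (gd_inv phi / 2) = (1 - ?c / (1 + ?s)) / (1 + ?c / (1 + ?s))"
    unfolding tanh_real_altdef by simp
  also have "1 - ?c / (1 + ?s) = (1 + ?s - ?c) / (1 + ?s)"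
    using pos by (simp add: field_simps)
  also have "1 + ?c / (1 + ?s) = (1 + ?s + ?c) / (1 + ?s)"
    using pos by (simp add: field_simps)
  also have "(1 + ?s - ?c) / (1 + ?s) / ((1 + ?s + ?c) / (1 + ?s)) = (1 + ?s - ?c) / (1 + ?s + ?c)"
    using pos by simp
  also have "\<dots> = ?s / (?c + 1)"
  proof -
    have "(1 + ?s - ?c) * (?c + 1) = ?s * (1 + ?s + ?c)"
      using sin_cos_squared_add[of phi] by (simp add: algebra_simps power2_eq_square)
    moreover have "0 < 1 + ?s + ?c"
      using pos assms by linarith
    ultimately show ?thesis
      using assms by (simp add: frac_eq_eq)
  qed
  also have "\<dots> = tan (phi / 2)"
    using tan_half[of "phi / 2"] by simp
  finally show ?thesis .
qed

lemma exp_neg_gd_inv_complement: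
  fixes phi :: real
  assumes "0 < sin phi"
  shows "exp (- gd_inv (pi / 2 - phi)) = tan (phi / 2)"
proof -
  have complement: "sin (pi / 2 - phi) = cos phi" "cos (pi / 2 - phi) = sin phi"
    by (simp_all add: sin_diff cos_diff)
  then have "0 < (1 + cos phi) / sin phi"
    using gd_inv_arg_pos(2)[of "pi / 2 - phi"] assms by simp
  then have "exp (- gd_inv (pi / 2 - phi)) = sin phi / (1 + cos phi)"
    unfolding gd_inv_def complement by (simp add: exp_minus)
  also have "\<dots> = tan (phi / 2)"
    using tan_half[of "phi / 2"] by (simp add: add.commute)
  finally show ?thesis .
qed

lemma isingJ_imaginary_modulus:
  assumes "m < 1" "0 < tb" "tb < pi / 2"
  obtains phi where "0 < phi" "phi < pi / 2"
    "isingJ m tb = gd_inv phi / 2"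
    "isingJ (- m / (1 - m)) (pi / 2 - tb) = gd_inv (pi / 2 - phi) / 2"
proof
  let ?phi = "jac_am m (2 * ell_K m / pi * tb)"
  show "0 < ?phi" "?phi < pi / 2"
    using jac_am_in_quarter[OF assms(1) scaled_angle_bounds[OF assms]] by simp_all
  show "isingJ m tb = gd_inv ?phi / 2"
    by (rule isingJ_eq_gd_inv)
  show "isingJ (- m / (1 - m)) (pi / 2 - tb) = gd_inv (pi / 2 - ?phi) / 2"
    unfolding isingJ_eq_gd_inv jac_am_imaginary_modulus[OF assms] ..
qed

lemma sinh_isingJ_dual_product:
  assumes "m < 1" "0 < tb" "tb < pi / 2"
  shows "sinh (2 * isingJ m tb) * sinh (2 * isingJ (- m / (1 - m)) (pi / 2 - tb)) = 1"
proof -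
  obtain phi where phi: "0 < phi" "phi < pi / 2"
    "isingJ m tb = gd_inv phi / 2"
    "isingJ (- m / (1 - m)) (pi / 2 - tb) = gd_inv (pi / 2 - phi) / 2"
    using isingJ_imaginary_modulus[OF assms] .
  have "0 < cos phi" "0 < cos (pi / 2 - phi)" "0 < tan phi"
    using phi by (simp_all add: cos_gt_zero_pi cos_diff sin_gt_zero tan_gt_zero)
  then show ?thesis
    unfolding phi(3,4) by (simp add: sinh_gd_inv tan_cot)
qed

lemma tanh_isingJ_eq_exp_dual:
  assumes "m < 1" "0 < tb" "tb < pi / 2"
  shows "tanh (isingJ m tb) = exp (- 2 * isingJ (- m / (1 - m)) (pi / 2 - tb))"
proof -
  obtain phi where phi: "0 < phi" "phi < pi / 2"
    "isingJ m tb = gd_inv phi / 2"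
    "isingJ (- m / (1 - m)) (pi / 2 - tb) = gd_inv (pi / 2 - phi) / 2"
    using isingJ_imaginary_modulus[OF assms] .
  have "0 < cos phi" "0 < sin phi"
    using phi by (simp_all add: cos_gt_zero_pi sin_gt_zero)
  then show ?thesis
    unfolding phi(3,4) by (simp add: tanh_half_gd_inv exp_neg_gd_inv_complement)
qed

lemma config_measure_cong:
  assumes "C \<in> \<Omega>" "\<And>C' e. C' \<in> \<Omega> \<Longrightarrow> e \<in> C' \<Longrightarrow> w e = w' e"
  shows "config_measure \<Omega> w C = config_measure \<Omega> w' C"
  unfolding config_measure_def using assms by (simp cong: prod.cong sum.cong)

theorem mainTheorem11:
  fixes k :: real
    and V :: "'v set" and E :: "'e set" and ends :: "'e \<Rightarrow> 'v set" and theta :: "'e \<Rightarrow> real"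
  assumes "0 \<le> k" and "k < 1"
  shows "(\<forall>tb. 0 < tb \<and> tb < pi / 2 \<longrightarrow>
            sinh (2 * isingJ (k^2) tb) * sinh (2 * isingJ (- (k^2) / (1 - k^2)) (pi / 2 - tb)) = 1)
       \<and> (finite V \<and> finite E \<and> (\<forall>e\<in>E. ends e \<subseteq> V \<and> card (ends e) = 2)
            \<and> (\<forall>e\<in>E. 0 < theta e \<and> theta e < pi / 2) \<longrightarrow>
          (\<forall>C\<in>polygon_configs V E ends.
             config_measure (polygon_configs V E ends) (\<lambda>e. tanh (isingJ (k^2) (theta e))) C
           = config_measure (polygon_configs V E ends)
               (\<lambda>e. exp (- 2 * isingJ (- (k^2) / (1 - k^2)) (pi / 2 - theta e))) C))"
proof -
  have m: "k^2 < 1"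
    using assms by (simp add: abs_square_less_1)
  have "config_measure (polygon_configs V E ends) (\<lambda>e. tanh (isingJ (k^2) (theta e))) C
      = config_measure (polygon_configs V E ends)
          (\<lambda>e. exp (- 2 * isingJ (- (k^2) / (1 - k^2)) (pi / 2 - theta e))) C"
    if angles: "\<forall>e\<in>E. 0 < theta e \<and> theta e < pi / 2" and C: "C \<in> polygon_configs V E ends" for C
  proof (rule config_measure_cong[OF C])
    fix C' e
    assume "C' \<in> polygon_configs V E ends" "e \<in> C'"
    then have "e \<in> E"
      unfolding polygon_configs_def by blast
    then show "tanh (isingJ (k^2) (theta e)) = exp (- 2 * isingJ (- (k^2) / (1 - k^2)) (pi / 2 - theta e))"
      using tanh_isingJ_eq_exp_dual[OF m] angles by blast
  qed
  then show ?thesis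
    using sinh_isingJ_dual_product[OF m] by blast
qed

end
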